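(* Let $\mathbf{L}=U^{\oplus3}\oplus[-2]^{\oplus2}$. If $G\subset\mathrm{O}(\mathbf{L})$ is a group with $|G|=2$ whose image $G^{\sharp}$ in $\mathrm{O}(\mathbf{L}^{\sharp})$ is trivial, then $\mathbf{L}_G$ and $\mathbf{L}^G$ are $2$-elementary lattices.
   Context: $U$ is the hyperbolic plane, $[n]$ the rank one lattice generated by a vector of square $n$. $\mathbf{L}^{\sharp}=\mathbf{L}^*/\mathbf{L}$ is the discriminant group and $G^{\sharp}$ is the image of $G$ under the natural map $\mathrm{O}(\mathbf{L})\to\mathrm{O}(\mathbf{L}^{\sharp})$. A lattice is $2$-elementary if its discriminant group is isomorphic to $(\mathbb{Z}/2\mathbb{Z})^{\oplus a}$ for some $a\ge0$. $\mathbf{L}^G$ is the invariant sublattice and $\mathbf{L}_G=(\mathbf{L}^G)^{\perp}$ the coinvariant sublattice. *)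

theory Defs
  imports Complex_Main "HOL-Library.Numeral_Type"
begin

text \<open>The lattice L = U^3 + [-2]^2 is modelled as Z^8 inside Q^8 (vectors are
functions from the 8-element type to rat), with the Gram matrix gram below.\<close>

type_synonym vec8 = "8 \<Rightarrow> rat"
type_synonym mat8 = "8 \<Rightarrow> 8 \<Rightarrow> int"

definition gram :: mat8 where
  "gram i j =
     (if (i = 0 \<and> j = 1) \<or> (i = 1 \<and> j = 0) \<or>
         (i = 2 \<and> j = 3) \<or> (i = 3 \<and> j = 2) \<or>
         (i = 4 \<and> j = 5) \<or> (i = 5 \<and> j = 4) then 1
      else if i = j \<and> (i = 6 \<or> i = 7) then -2
      else 0)"

definition bform :: "vec8 \<Rightarrow> vec8 \<Rightarrow> rat" where
  "bform x y = (\<Sum>i\<in>UNIV. \<Sum>j\<in>UNIV. x i * of_int (gram i j) * y j)"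

definition Lat :: "vec8 set" where
  "Lat = {x. \<forall>i. x i \<in> \<int>}"

definition app :: "mat8 \<Rightarrow> vec8 \<Rightarrow> vec8" where
  "app g x = (\<lambda>i. \<Sum>j\<in>UNIV. of_int (g i j) * x j)"

definition matmul :: "mat8 \<Rightarrow> mat8 \<Rightarrow> mat8" where
  "matmul g h = (\<lambda>i k. \<Sum>j\<in>UNIV. g i j * h j k)"

definition idmat :: mat8 where
  "idmat = (\<lambda>i j. if i = j then 1 else 0)"

definition OL :: "mat8 set" where
  "OL = {g. (\<exists>h. matmul g h = idmat \<and> matmul h g = idmat) \<and>
            (\<forall>x y. bform (app g x) (app g y) = bform x y)}"

definition is_subgroup_OL :: "mat8 set \<Rightarrow> bool" where
  "is_subgroup_OL G \<longleftrightarrow> G \<subseteq> OL \<and> idmat \<in> G \<and>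
     (\<forall>g\<in>G. \<forall>h\<in>G. matmul g h \<in> G) \<and>
     (\<forall>g\<in>G. \<exists>h\<in>G. matmul g h = idmat \<and> matmul h g = idmat)"

definition qspan :: "vec8 set \<Rightarrow> vec8 set" where
  "qspan M = {x. \<exists>(c::nat \<Rightarrow> rat) (v::nat \<Rightarrow> vec8) k.
                  (\<forall>i<k. v i \<in> M) \<and> x = (\<lambda>t. \<Sum>i<k. c i * v i t)}"

definition dual :: "vec8 set \<Rightarrow> vec8 set" where
  "dual M = {x \<in> qspan M. \<forall>m\<in>M. bform x m \<in> \<int>}"

definition trivial_on_disc :: "mat8 set \<Rightarrow> bool" where
  "trivial_on_disc G \<longleftrightarrow> (\<forall>g\<in>G. \<forall>x\<in>dual Lat. (\<lambda>i. app g x i - x i) \<in> Lat)"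

definition invariant :: "mat8 set \<Rightarrow> vec8 set" where
  "invariant G = {x \<in> Lat. \<forall>g\<in>G. app g x = x}"

definition coinvariant :: "mat8 set \<Rightarrow> vec8 set" where
  "coinvariant G = {x \<in> Lat. \<forall>y\<in>invariant G. bform x y = 0}"

text \<open>M is 2-elementary: M^*/M is isomorphic to (Z/2Z)^a for some a.
  (Z/2Z)^a is modelled as the bool-vectors supported in {..<a} under xor; the
  isomorphism is given via a surjective homomorphism from M^* with kernel M.\<close>
definition two_elementary :: "vec8 set \<Rightarrow> bool" where
  "two_elementary M \<longleftrightarrow> (\<exists>(a::nat) (\<phi>::vec8 \<Rightarrow> nat \<Rightarrow> bool).
      (\<forall>x\<in>dual M. \<forall>y\<in>dual M. \<phi> (\<lambda>t. x t + y t) = (\<lambda>i. \<phi> x i \<noteq> \<phi> y i)) \<and>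
      \<phi> ` dual M = {v. \<forall>i\<ge>a. \<not> v i} \<and>
      {x \<in> dual M. \<phi> x = (\<lambda>_. False)} = M)"

end

theory Submission
  imports Defs
begin

text \<open>Write \<open>G = {1, g}\<close>. Since \<open>L\<^sup>\<sharp>\<close> is 2-elementary, \<open>2 L\<^sup>* \<subseteq> L\<close>, and as \<open>g\<close> acts
trivially on \<open>L\<^sup>\<sharp>\<close> also \<open>(g - 1) L\<^sup>* \<subseteq> L\<close>. So for \<open>w \<in> L\<^sup>*\<close> the vector
\<open>w + g w = 2 w + (g - 1) w\<close> lies in \<open>L\<^sup>G\<close> and \<open>w - g w\<close> lies in \<open>L\<^sub>G\<close>. For \<open>x\<close> in the dual
of \<open>L\<^sup>G\<close> this gives \<open>(2 x, w) = (x, w + g w) \<in> \<int>\<close>, and for \<open>x\<close> in the dual of \<open>L\<^sub>G\<close>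
it gives \<open>(2 x, w) = (x, w + g w) + (x, w - g w) = (x, w - g w) \<in> \<int>\<close>; as \<open>L\<close> is its own
double dual, \<open>2 x \<in> L\<close> in both cases.

For a primitive sublattice \<open>M\<close> with \<open>2 M\<^sup>* \<subseteq> L\<close>, recording which coordinates of
\<open>x \<in> M\<^sup>*\<close> are not integral is a homomorphism to \<open>\<bbbF>\<^sub>2\<^sup>8\<close> with kernel \<open>M\<^sup>* \<inter> L = M\<close>,
so \<open>M\<^sup>\<sharp>\<close> is a subgroup of \<open>\<bbbF>\<^sub>2\<^sup>8\<close>; restricting to a suitable set of coordinates
identifies any such subgroup with some \<open>\<bbbF>\<^sub>2\<^sup>a\<close>.\<close>

lemma xor_closed_ex_coordinate_bij:
  fixes W :: "('a::finite \<Rightarrow> bool) set"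
  assumes zero: "(\<lambda>_. False) \<in> W"
    and xor: "\<And>u v. u \<in> W \<Longrightarrow> v \<in> W \<Longrightarrow> (\<lambda>i. u i \<noteq> v i) \<in> W"
  shows "\<exists>P. bij_betw (\<lambda>w i. i \<in> P \<and> w i) W {v. \<forall>i. i \<notin> P \<longrightarrow> \<not> v i}"
proof -
  define realised where "realised = {P. \<forall>t. \<exists>w\<in>W. \<forall>i\<in>P. w i = t i}"
  have "finite realised" by simp
  moreover have "{} \<in> realised" using zero unfolding realised_def by blast
  ultimately obtain P where P: "P \<in> realised" and P_max: "\<And>Q. Q \<in> realised \<Longrightarrow> P \<subseteq> Q \<Longrightarrow> P = Q"
    using finite_has_maximal[of realised] by blast
  \<comment> \<open>A non-zero element \<open>u + v\<close> vanishing on \<open>P\<close> would let \<open>W\<close> realise every pattern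
     on \<open>P\<close> plus a coordinate where \<open>u + v\<close> is non-zero, contradicting maximality.\<close>
  have "inj_on (\<lambda>w i. i \<in> P \<and> w i) W"
  proof (rule inj_onI, rule ccontr)
    fix u v assume u: "u \<in> W" and v: "v \<in> W" and "u \<noteq> v"
      and same: "(\<lambda>i. i \<in> P \<and> u i) = (\<lambda>i. i \<in> P \<and> v i)"
    have agree: "\<forall>i\<in>P. u i = v i" using same by (metis (full_types))
    from \<open>u \<noteq> v\<close> obtain j where j: "u j \<noteq> v j" by blast
    with agree have "j \<notin> P" by blast
    have "insert j P \<in> realised"
      unfolding realised_def
    proof (intro CollectI allI)
      fix t
      obtain w where w: "w \<in> W" "\<forall>i\<in>P. w i = t i" using P unfolding realised_def by blast
      show "\<exists>w\<in>W. \<forall>i\<in>insert j P. w i = t i"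
      proof (cases "w j = t j")
        case True then show ?thesis using w by auto
      next
        case False
        show ?thesis
        proof (rule bexI)
          show "(\<lambda>i. w i \<noteq> (u i \<noteq> v i)) \<in> W" using xor[OF w(1) xor[OF u v]] .
          show "\<forall>i\<in>insert j P. (w i \<noteq> (u i \<noteq> v i)) = t i"
            using w(2) False j agree by auto
        qed
      qed
    qed
    with P_max \<open>j \<notin> P\<close> show False by blast
  qed
  moreover have "(\<lambda>w i. i \<in> P \<and> w i) ` W = {v. \<forall>i. i \<notin> P \<longrightarrow> \<not> v i}"
  proof
    show "{v. \<forall>i. i \<notin> P \<longrightarrow> \<not> v i} \<subseteq> (\<lambda>w i. i \<in> P \<and> w i) ` W"
    proof
      fix v assume v: "v \<in> {v. \<forall>i. i \<notin> P \<longrightarrow> \<not> v i}"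
      obtain w where "w \<in> W" "\<forall>i\<in>P. w i = v i" using P unfolding realised_def by blast
      with v have "(\<lambda>i. i \<in> P \<and> w i) = v" by auto
      with \<open>w \<in> W\<close> show "v \<in> (\<lambda>w i. i \<in> P \<and> w i) ` W" by blast
    qed
  qed auto
  ultimately show ?thesis unfolding bij_betw_def by blast
qed

lemma bij_betw_reindex_bool_vectors:
  fixes a :: nat
  assumes h: "bij_betw h {0..<a} P"
  shows "bij_betw (\<lambda>u n. n < a \<and> u (h n)) {u. \<forall>i. i \<notin> P \<longrightarrow> \<not> u i} {v. \<forall>n\<ge>a. \<not> v n}"
proof -
  define k where "k = the_inv_into {0..<a} h"
  have k: "bij_betw k P {0..<a}"
    unfolding k_def using h by (rule bij_betw_the_inv_into)
  have h_into: "h n \<in> P" if "n < a" for n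
    using bij_betw_apply[OF h, of n] that by simp
  have k_into: "k i < a" if "i \<in> P" for i
    using bij_betw_apply[OF k, of i] that by simp
  have k_h: "k (h n) = n" if "n < a" for n
    using h that unfolding k_def bij_betw_def by (simp add: the_inv_into_f_f)
  have h_k: "h (k i) = i" if "i \<in> P" for i
    using h that unfolding k_def bij_betw_def by (simp add: f_the_inv_into_f)
  show ?thesis
    by (rule bij_betw_byWitness[where f' = "\<lambda>v i. i \<in> P \<and> v (k i)"])
      (auto simp: fun_eq_iff h_into k_into k_h h_k; metis h_into k_into k_h h_k not_le)+
qed

lemma xor_closed_iso_bool_vectors:
  fixes W :: "('a::finite \<Rightarrow> bool) set"
  assumes "(\<lambda>_. False) \<in> W"
    and "\<And>u v. u \<in> W \<Longrightarrow> v \<in> W \<Longrightarrow> (\<lambda>i. u i \<noteq> v i) \<in> W"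
  shows "\<exists>a (\<beta> :: ('a \<Rightarrow> bool) \<Rightarrow> nat \<Rightarrow> bool). bij_betw \<beta> W {v. \<forall>n\<ge>a. \<not> v n} \<and>
           (\<forall>u v. \<beta> (\<lambda>i. u i \<noteq> v i) = (\<lambda>n. \<beta> u n \<noteq> \<beta> v n))"
proof -
  obtain P where P: "bij_betw (\<lambda>w i. i \<in> P \<and> w i) W {v. \<forall>i. i \<notin> P \<longrightarrow> \<not> v i}"
    using xor_closed_ex_coordinate_bij[OF assms] by blast
  obtain h where "bij_betw h {0..<card P} P"
    using ex_bij_betw_nat_finite[of P] by auto
  then have "bij_betw (\<lambda>u n. n < card P \<and> u (h n)) {v. \<forall>i. i \<notin> P \<longrightarrow> \<not> v i} {v. \<forall>n\<ge>card P. \<not> v n}"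
    by (rule bij_betw_reindex_bool_vectors)
  with P have "bij_betw (\<lambda>w n. n < card P \<and> h n \<in> P \<and> w (h n)) W {v. \<forall>n\<ge>card P. \<not> v n}"
    by (auto dest: bij_betw_trans simp: comp_def)
  then show ?thesis
    by (intro exI[of _ "card P"] exI[of _ "\<lambda>w n. n < card P \<and> h n \<in> P \<and> w (h n)"]) auto
qed

lemma half_integers_add_not_Ints_iff:
  fixes a b :: "'a::{field, ring_char_0}"
  assumes "2 * a \<in> \<int>" and "2 * b \<in> \<int>"
  shows "a + b \<notin> \<int> \<longleftrightarrow> (a \<notin> \<int>) \<noteq> (b \<notin> \<int>)"
proof -
  obtain m n where "2 * a = of_int m" "2 * b = of_int n"
    using assms by (auto elim!: Ints_cases)
  then have "a = of_int m / of_int 2" "b = of_int n / of_int 2" "a + b = of_int (m + n) / of_int 2"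
    by (simp_all add: field_simps)
  then show ?thesis
    by (simp only: of_int_div_of_int_in_Ints_iff) auto
qed

lemma UNIV_8: "(UNIV :: 8 set) = {0, 1, 2, 3, 4, 5, 6, 7}"
  by (rule sym, rule card_subset_eq) simp_all

lemma forall_8: "(\<forall>i::8. P i) \<longleftrightarrow> P 0 \<and> P 1 \<and> P 2 \<and> P 3 \<and> P 4 \<and> P 5 \<and> P 6 \<and> P 7"
  by (metis UNIV_8 UNIV_I insert_iff empty_iff)

lemma bform_explicit:
  "bform x y = x 0 * y 1 + x 1 * y 0 + x 2 * y 3 + x 3 * y 2 + x 4 * y 5 + x 5 * y 4
     - 2 * x 6 * y 6 - 2 * x 7 * y 7"
  unfolding bform_def UNIV_8 by (simp add: gram_def algebra_simps)

lemma bform_add_left: "bform (\<lambda>t. x t + y t) z = bform x z + bform y z"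
  unfolding bform_def by (simp add: algebra_simps sum.distrib)

lemma bform_add_right: "bform z (\<lambda>t. x t + y t) = bform z x + bform z y"
  unfolding bform_def by (simp add: algebra_simps sum.distrib)

lemma bform_diff_left: "bform (\<lambda>t. x t - y t) z = bform x z - bform y z"
  unfolding bform_def by (simp add: algebra_simps sum_subtractf)

lemma bform_diff_right: "bform z (\<lambda>t. x t - y t) = bform z x - bform z y"
  unfolding bform_def by (simp add: algebra_simps sum_subtractf)

lemma bform_scale_left: "bform (\<lambda>t. c * x t) z = c * bform x z"
  unfolding bform_def by (simp add: algebra_simps sum_distrib_left)

lemma bform_zero_left: "bform (\<lambda>t. 0) z = 0"
  unfolding bform_def by simp

lemma bform_Lat: "x \<in> Lat \<Longrightarrow> y \<in> Lat \<Longrightarrow> bform x y \<in> \<int>"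
  unfolding Lat_def bform_def by (auto intro!: Ints_sum)

lemma bform_app: "g \<in> OL \<Longrightarrow> bform (app g x) (app g y) = bform x y"
  unfolding OL_def by auto

lemma app_add: "app g (\<lambda>t. x t + y t) = (\<lambda>i. app g x i + app g y i)"
  unfolding app_def by (simp add: algebra_simps sum.distrib)

lemma app_scale: "app g (\<lambda>t. c * x t) = (\<lambda>i. c * app g x i)"
  unfolding app_def by (simp add: algebra_simps sum_distrib_left)

lemma app_zero: "app g (\<lambda>t. 0) = (\<lambda>t. 0)"
  unfolding app_def by simp

lemma app_matmul: "app (matmul g h) x = app g (app h x)"
proof
  fix i
  have "app (matmul g h) x i = (\<Sum>k\<in>UNIV. \<Sum>j\<in>UNIV. of_int (g i j) * (of_int (h j k) * x k))"
    unfolding app_def matmul_def by (simp add: sum_distrib_right mult.assoc)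
  also have "\<dots> = app g (app h x) i"
    unfolding app_def by (subst sum.swap) (simp add: sum_distrib_left)
  finally show "app (matmul g h) x i = app g (app h x) i" .
qed

lemma app_idmat: "app idmat x = x"
proof -
  have "of_int (idmat i j) * x j = (if i = j then x j else 0)" for i j
    by (simp add: idmat_def)
  then show ?thesis unfolding app_def by simp
qed

lemma scaled_in_qspan: "x \<in> M \<Longrightarrow> (\<lambda>t. c * x t) \<in> qspan M"
  unfolding qspan_def by (intro CollectI exI[of _ "\<lambda>_. c"] exI[of _ "\<lambda>_. x"] exI[of _ 1]) auto

lemma subset_qspan: "M \<subseteq> qspan M"
  using scaled_in_qspan[of _ M 1] by auto

lemma qspan_add:
  assumes "x \<in> qspan M" and "y \<in> qspan M"
  shows "(\<lambda>t. x t + y t) \<in> qspan M"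
proof -
  obtain c1 :: "nat \<Rightarrow> rat" and v1 k1 where 1: "\<forall>i<k1. v1 i \<in> M" "x = (\<lambda>t. \<Sum>i<k1. c1 i * v1 i t)"
    using assms(1) unfolding qspan_def by blast
  obtain c2 :: "nat \<Rightarrow> rat" and v2 k2 where 2: "\<forall>i<k2. v2 i \<in> M" "y = (\<lambda>t. \<Sum>i<k2. c2 i * v2 i t)"
    using assms(2) unfolding qspan_def by blast
  define c where "c i = (if i < k1 then c1 i else c2 (i - k1))" for i
  define v where "v i = (if i < k1 then v1 i else v2 (i - k1))" for i
  have split: "(\<Sum>i<k1 + k2. f i) = (\<Sum>i<k1. f i) + (\<Sum>i<k2. f (k1 + i))" for f :: "nat \<Rightarrow> rat"
    by (induction k2) (simp_all add: add.assoc)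
  have "\<forall>i<k1 + k2. v i \<in> M" using 1 2 unfolding v_def by auto
  moreover have "(\<Sum>i<k1 + k2. c i * v i t) = x t + y t" for t
    unfolding split 1 2 c_def v_def by simp
  ultimately show ?thesis
    unfolding qspan_def by (intro CollectI exI[of _ c] exI[of _ v] exI[of _ "k1 + k2"]) auto
qed

lemma qspan_minimal:
  assumes "M \<subseteq> S" and "(\<lambda>t. 0) \<in> S"
    and "\<And>x y. x \<in> S \<Longrightarrow> y \<in> S \<Longrightarrow> (\<lambda>t. x t + y t) \<in> S"
    and "\<And>c x. x \<in> S \<Longrightarrow> (\<lambda>t. c * x t) \<in> S"
  shows "qspan M \<subseteq> S"
proof
  fix x assume "x \<in> qspan M"
  then obtain c :: "nat \<Rightarrow> rat" and v k where v: "\<forall>i<k. v i \<in> M" and x: "x = (\<lambda>t. \<Sum>i<k. c i * v i t)"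
    unfolding qspan_def by blast
  have "(\<lambda>t. \<Sum>i<n. c i * v i t) \<in> S" if "n \<le> k" for n
    using that
  proof (induction n)
    case 0
    then show ?case using assms(2) by simp
  next
    case (Suc n)
    then have "(\<lambda>t. (\<Sum>i<n. c i * v i t) + c n * v n t) \<in> S"
      using assms v by (simp add: subset_iff)
    then show ?case by simp
  qed
  then show "x \<in> S" using x by simp
qed

lemma dual_add: "x \<in> dual M \<Longrightarrow> y \<in> dual M \<Longrightarrow> (\<lambda>t. x t + y t) \<in> dual M"
  unfolding dual_def by (auto intro: qspan_add simp: bform_add_left)

lemma subset_dual: "M \<subseteq> Lat \<Longrightarrow> M \<subseteq> dual M"
  unfolding dual_def using subset_qspan bform_Lat by blast

lemma unit_in_Lat: "(\<lambda>i. if i = j then 1 else 0) \<in> Lat"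
  unfolding Lat_def by simp

lemma two_times_dual_Lat_in_Lat:
  assumes "w \<in> dual Lat"
  shows "(\<lambda>t. 2 * w t) \<in> Lat"
proof -
  have "bform w (\<lambda>i. if i = j then 1 else 0) \<in> \<int>" for j
    using assms unit_in_Lat unfolding dual_def by blast
  from this[of 0] this[of 1] this[of 2] this[of 3] this[of 4] this[of 5] this[of 6] this[of 7]
  show ?thesis
    unfolding Lat_def mem_Collect_eq forall_8 by (simp add: bform_explicit)
qed

lemma in_Lat_if_integral_on_dual_Lat:
  assumes "\<And>w. w \<in> dual Lat \<Longrightarrow> bform z w \<in> \<int>"
  shows "z \<in> Lat"
proof -
  have unit: "bform z (\<lambda>i. if i = j then 1 else 0) \<in> \<int>" for j
    using assms subset_dual[of Lat] unit_in_Lat by blast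
  have half_unit: "bform z (\<lambda>i. if i = j then 1/2 else 0) \<in> \<int>" if "j = 6 \<or> j = 7" for j
  proof (rule assms)
    have "(\<lambda>i. if i = j then 1/2 else 0) \<in> qspan Lat"
      using scaled_in_qspan[OF unit_in_Lat, of "1/2" j] by (simp add: if_distrib cong: if_cong)
    moreover have "bform (\<lambda>i. if i = j then 1/2 else 0) m \<in> \<int>" if "m \<in> Lat" for m
      using \<open>j = 6 \<or> j = 7\<close> \<open>m \<in> Lat\<close> unfolding Lat_def by (auto simp: bform_explicit)
    ultimately show "(\<lambda>i. if i = j then 1/2 else 0) \<in> dual Lat"
      unfolding dual_def by blast
  qed
  from unit[of 0] unit[of 1] unit[of 2] unit[of 3] unit[of 4] unit[of 5] half_unit[of 6] half_unit[of 7]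
  show ?thesis
    unfolding Lat_def mem_Collect_eq forall_8 by (simp add: bform_explicit)
qed

lemma two_elementary_if_xor_hom:
  fixes \<psi> :: "vec8 \<Rightarrow> 'a::finite \<Rightarrow> bool"
  assumes "M \<noteq> {}"
    and hom: "\<And>x y. x \<in> dual M \<Longrightarrow> y \<in> dual M \<Longrightarrow> \<psi> (\<lambda>t. x t + y t) = (\<lambda>i. \<psi> x i \<noteq> \<psi> y i)"
    and kernel: "{x \<in> dual M. \<psi> x = (\<lambda>_. False)} = M"
  shows "two_elementary M"
proof -
  have zero_in: "(\<lambda>_. False) \<in> \<psi> ` dual M"
    using \<open>M \<noteq> {}\<close> kernel by force
  moreover have "(\<lambda>i. u i \<noteq> v i) \<in> \<psi> ` dual M"
    if u: "u \<in> \<psi> ` dual M" and v: "v \<in> \<psi> ` dual M" for u v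
  proof -
    obtain x y where "x \<in> dual M" "y \<in> dual M" "u = \<psi> x" "v = \<psi> y"
      using u v by blast
    then have "(\<lambda>i. u i \<noteq> v i) = \<psi> (\<lambda>t. x t + y t)" and "(\<lambda>t. x t + y t) \<in> dual M"
      using hom dual_add by simp_all
    then show ?thesis by simp
  qed
  ultimately obtain a and \<beta> :: "('a \<Rightarrow> bool) \<Rightarrow> nat \<Rightarrow> bool"
    where \<beta>: "bij_betw \<beta> (\<psi> ` dual M) {v. \<forall>n\<ge>a. \<not> v n}"
      and \<beta>_add: "\<And>u v. \<beta> (\<lambda>i. u i \<noteq> v i) = (\<lambda>n. \<beta> u n \<noteq> \<beta> v n)"
    using xor_closed_iso_bool_vectors[of "\<psi> ` dual M"] by meson
  have \<beta>_zero: "\<beta> (\<lambda>_. False) = (\<lambda>_. False)"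
    using \<beta>_add[of "\<lambda>_. False" "\<lambda>_. False"] by (simp add: fun_eq_iff)
  have "\<beta> (\<psi> x) = (\<lambda>_. False) \<longleftrightarrow> \<psi> x = (\<lambda>_. False)" if "x \<in> dual M" for x
    using that inj_on_eq_iff[OF bij_betw_imp_inj_on[OF \<beta>] _ zero_in] \<beta>_zero by simp
  then have "{x \<in> dual M. \<beta> (\<psi> x) = (\<lambda>_. False)} = M"
    using kernel by blast
  moreover have "\<forall>x\<in>dual M. \<forall>y\<in>dual M. \<beta> (\<psi> (\<lambda>t. x t + y t)) = (\<lambda>i. \<beta> (\<psi> x) i \<noteq> \<beta> (\<psi> y) i)"
    using hom \<beta>_add by simp
  moreover have "(\<lambda>x. \<beta> (\<psi> x)) ` dual M = {v. \<forall>i\<ge>a. \<not> v i}"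
    using \<beta> unfolding bij_betw_def by (simp add: image_image)
  ultimately show ?thesis
    unfolding two_elementary_def by (intro exI[of _ a] exI[of _ "\<lambda>x. \<beta> (\<psi> x)"] conjI)
qed

lemma two_elementary_if_two_times_dual_in_Lat:
  assumes "(\<lambda>t. 0) \<in> M" and "M \<subseteq> Lat" and primitive: "qspan M \<inter> Lat \<subseteq> M"
    and two_times: "\<And>x. x \<in> dual M \<Longrightarrow> (\<lambda>t. 2 * x t) \<in> Lat"
  shows "two_elementary M"
proof (rule two_elementary_if_xor_hom)
  show "(\<lambda>i. x i + y i \<notin> \<int>) = (\<lambda>i. (x i \<notin> \<int>) \<noteq> (y i \<notin> \<int>))" if "x \<in> dual M" "y \<in> dual M" for x y
    using two_times[OF that(1)] two_times[OF that(2)]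
    unfolding Lat_def by (simp add: half_integers_add_not_Ints_iff)
  show "{x \<in> dual M. (\<lambda>i. x i \<notin> \<int>) = (\<lambda>_. False)} = M"
    using primitive subset_dual[OF \<open>M \<subseteq> Lat\<close>] \<open>M \<subseteq> Lat\<close>
    unfolding dual_def Lat_def by (auto simp: fun_eq_iff)
qed (use \<open>(\<lambda>t. 0) \<in> M\<close> in blast)

definition fixed_Lat :: "mat8 \<Rightarrow> vec8 set" where
  "fixed_Lat g = {x \<in> Lat. app g x = x}"

definition orth_Lat :: "vec8 set \<Rightarrow> vec8 set" where
  "orth_Lat M = {x \<in> Lat. \<forall>y\<in>M. bform x y = 0}"

lemma app_eq_on_qspan_fixed_Lat: "x \<in> qspan (fixed_Lat g) \<Longrightarrow> app g x = x"
  using qspan_minimal[of "fixed_Lat g" "{x. app g x = x}"]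
  by (auto simp: fixed_Lat_def app_add app_scale app_zero)

lemma bform_eq_0_on_qspan_orth_Lat: "x \<in> qspan (orth_Lat M) \<Longrightarrow> y \<in> M \<Longrightarrow> bform x y = 0"
  using qspan_minimal[of "orth_Lat M" "{x. \<forall>y\<in>M. bform x y = 0}"]
  by (auto simp: orth_Lat_def bform_add_left bform_scale_left bform_zero_left)

locale Lat_involution =
  fixes g :: mat8
  assumes isometry: "g \<in> OL"
    and involutive: "app g (app g x) = x"
    and trivial_on_discriminant: "w \<in> dual Lat \<Longrightarrow> (\<lambda>i. app g w i - w i) \<in> Lat"
begin

lemma add_app_in_fixed_Lat:
  assumes "w \<in> dual Lat"
  shows "(\<lambda>t. w t + app g w t) \<in> fixed_Lat g"
proof -
  have "w t + app g w t \<in> \<int>" for t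
  proof -
    have "w t + app g w t = 2 * w t + (app g w t - w t)" by simp
    also have "\<dots> \<in> \<int>"
      using two_times_dual_Lat_in_Lat[OF assms] trivial_on_discriminant[OF assms]
      unfolding Lat_def by (blast intro: Ints_add)
    finally show ?thesis .
  qed
  then show ?thesis
    unfolding fixed_Lat_def Lat_def by (simp add: app_add involutive add.commute)
qed

lemma diff_app_in_orth_fixed_Lat:
  assumes "w \<in> dual Lat"
  shows "(\<lambda>t. w t - app g w t) \<in> orth_Lat (fixed_Lat g)"
proof -
  have "app g w t - w t \<in> \<int>" for t
    using trivial_on_discriminant[OF assms] unfolding Lat_def by simp
  then have "(\<lambda>t. w t - app g w t) \<in> Lat"
    unfolding Lat_def using Ints_minus by fastforce
  moreover have "bform (app g w) y = bform w y" if "y \<in> fixed_Lat g" for y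
    using bform_app[OF isometry, of w y] that unfolding fixed_Lat_def by simp
  ultimately show ?thesis
    unfolding orth_Lat_def by (simp add: bform_diff_left)
qed

lemma two_elementary_fixed_Lat: "two_elementary (fixed_Lat g)"
proof (rule two_elementary_if_two_times_dual_in_Lat)
  show "(\<lambda>t. 0) \<in> fixed_Lat g" "fixed_Lat g \<subseteq> Lat" "qspan (fixed_Lat g) \<inter> Lat \<subseteq> fixed_Lat g"
    using app_eq_on_qspan_fixed_Lat by (auto simp: fixed_Lat_def Lat_def app_zero)
next
  fix x assume x: "x \<in> dual (fixed_Lat g)"
  show "(\<lambda>t. 2 * x t) \<in> Lat"
  proof (rule in_Lat_if_integral_on_dual_Lat)
    fix w assume w: "w \<in> dual Lat"
    have "app g x = x"
      using x app_eq_on_qspan_fixed_Lat unfolding dual_def by blast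
    then have "bform x (app g w) = bform x w"
      using bform_app[OF isometry, of x w] by simp
    then have "bform (\<lambda>t. 2 * x t) w = bform x (\<lambda>t. w t + app g w t)"
      by (simp add: bform_scale_left bform_add_right)
    also have "\<dots> \<in> \<int>"
      using x add_app_in_fixed_Lat[OF w] unfolding dual_def by blast
    finally show "bform (\<lambda>t. 2 * x t) w \<in> \<int>" .
  qed
qed

lemma two_elementary_orth_fixed_Lat: "two_elementary (orth_Lat (fixed_Lat g))"
proof (rule two_elementary_if_two_times_dual_in_Lat)
  show "(\<lambda>t. 0) \<in> orth_Lat (fixed_Lat g)" "orth_Lat (fixed_Lat g) \<subseteq> Lat"
    "qspan (orth_Lat (fixed_Lat g)) \<inter> Lat \<subseteq> orth_Lat (fixed_Lat g)"
    using bform_eq_0_on_qspan_orth_Lat by (auto simp: orth_Lat_def Lat_def bform_zero_left)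
next
  fix x assume x: "x \<in> dual (orth_Lat (fixed_Lat g))"
  show "(\<lambda>t. 2 * x t) \<in> Lat"
  proof (rule in_Lat_if_integral_on_dual_Lat)
    fix w assume w: "w \<in> dual Lat"
    have "bform x (\<lambda>t. w t + app g w t) = 0"
      using x bform_eq_0_on_qspan_orth_Lat add_app_in_fixed_Lat[OF w] unfolding dual_def by blast
    then have "bform (\<lambda>t. 2 * x t) w = bform x (\<lambda>t. w t - app g w t)"
      by (simp add: bform_scale_left bform_add_right bform_diff_right)
    also have "\<dots> \<in> \<int>"
      using x diff_app_in_orth_fixed_Lat[OF w] unfolding dual_def by blast
    finally show "bform (\<lambda>t. 2 * x t) w \<in> \<int>" .
  qed
qed

end

lemma card_2_subgroup_OL_obtain_involution:
  assumes G: "is_subgroup_OL G" and "card G = 2"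
  obtains g where "g \<in> OL" "G = {idmat, g}" "\<And>x. app g (app g x) = x"
proof -
  obtain a b where "G = {a, b}"
    using \<open>card G = 2\<close> card_2_iff by metis
  moreover have "idmat \<in> G"
    using G unfolding is_subgroup_OL_def by blast
  ultimately obtain g where g: "G = {idmat, g}"
    by blast
  then have "g \<in> OL" "matmul g g \<in> {idmat, g}" and "\<exists>h. matmul h g = idmat"
    using G unfolding is_subgroup_OL_def by auto
  then obtain h where h: "matmul h g = idmat" and gg: "matmul g g = idmat \<or> matmul g g = g"
    by blast
  have "app g (app g x) = x" for x
    using gg
  proof
    assume "matmul g g = idmat"
    then show ?thesis by (simp flip: app_matmul add: app_idmat)
  next
    assume "matmul g g = g"
    \<comment> \<open>an invertible idempotent is the identity\<close>
    then have "app g y = y" for y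
      using app_matmul[of h g] app_matmul[of g g] h by (metis app_idmat)
    then show ?thesis by simp
  qed
  with \<open>g \<in> OL\<close> g that show ?thesis by blast
qed

theorem lemma4p2:
  fixes G :: "mat8 set"
  assumes "is_subgroup_OL G"
    and "card G = 2"
    and "trivial_on_disc G"
  shows "two_elementary (coinvariant G) \<and> two_elementary (invariant G)"
proof -
  obtain g where g: "g \<in> OL" "G = {idmat, g}" "\<And>x. app g (app g x) = x"
    using card_2_subgroup_OL_obtain_involution[OF assms(1,2)] by blast
  interpret Lat_involution g
    using g \<open>trivial_on_disc G\<close> unfolding trivial_on_disc_def by unfold_locales auto
  have "invariant G = fixed_Lat g"
    unfolding invariant_def fixed_Lat_def g(2) by (simp add: app_idmat)
  moreover have "coinvariant G = orth_Lat (invariant G)"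
    unfolding coinvariant_def orth_Lat_def ..
  ultimately show ?thesis
    using two_elementary_fixed_Lat two_elementary_orth_fixed_Lat by simp
qed

end
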